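(* For any labeled test set $S_{\mathrm{test}} \subseteq \{\pm1\}^n\times\{\pm1\}$, depth $d \ge 0$, mapping $\mathcal{H}$ from restrictions to hypotheses, and restriction $\rho$, the procedure $\mathrm{FindTree}(S_{\mathrm{test}}, d, \mathcal{H}, \rho)$ returns a depth-$d$ tree $T$ satisfying \[ \mathrm{error}(T \circ_\rho \mathcal{H}, (S_{\mathrm{test}})_\rho) = \min_{T' \text{ a depth-}d\text{ decision tree}} \mathrm{error}(T' \circ_\rho \mathcal{H}, (S_{\mathrm{test}})_\rho), \] where the minimum ranges over depth-$d$ decision trees querying only coordinates $i$ with $\rho_i=\star$.
   Context: A restriction is $\rho\in\{\pm1,\star\}^n$; $x\in\rho$ means $x_i=\rho_i$ or $\rho_i=\star$ for all $i$; $\rho\cap(x_i=b)$ is $\rho$ with coordinate $i$ (previously $\star$) set to $b$; for two restrictions fixing disjoint coordinate sets, $\rho\cap\ell$ fixes both sets of coordinates. For a labeled set $S$, $S_\rho=\{(x,y)\in S:x\in\rho\}$, and $\mathrm{error}(h,S)$ is the fraction of $(x,y)\in S$ with $h(x)\ne y$. A depth-$d$ decision tree is a set of $2^d$ leaf restrictions defined recursively: depth $0$ is the single all-$\star$ restriction; depth $d\ge1$ has a root coordinate $i$ and two depth-$(d-1)$ subtrees not fixing $i$, whose leaves get coordinate $i$ set to $-1$ and $+1$ respectively. For a tree $T$ querying only coordinates free in $\rho$, $T\circ_\rho\mathcal{H}$ maps $x\in\rho$ to $\mathcal{H}(\rho\cap\ell)(x)$, where $\ell$ is the leaf of $T$ with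 $x\in\ell$. Procedure $\mathrm{FindTree}(S_{\mathrm{test}},d,\mathcal{H},\rho)$: if $d=0$ return the one-leaf tree; otherwise for each $i$ with $\rho_i=\star$, recursively compute $T_{+1}\leftarrow\mathrm{FindTree}(S_{\mathrm{test}},d-1,\mathcal{H},\rho\cap(x_i=1))$ and $T_{-1}\leftarrow\mathrm{FindTree}(S_{\mathrm{test}},d-1,\mathcal{H},\rho\cap(x_i=-1))$, let $T^{(i)}$ be the tree with root $x_i$ and subtrees $T_{-1}$, $T_{+1}$, and return the $T^{(i)}$ minimizing $\mathrm{error}(T^{(i)}\circ_\rho\mathcal{H},(S_{\mathrm{test}})_\rho)$. *)

theory Defs
  imports Complex_Main
begin

text \<open>Points of {+-1}^n are int lists of length n; restrictions are lists of
  int option of length n, None standing for the free symbol (star).\<close>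

type_synonym point = "int list"
type_synonym restr = "int option list"
type_synonym hyp = "point \<Rightarrow> int"

definition pm1 :: "int \<Rightarrow> bool" where
  "pm1 b \<longleftrightarrow> b = 1 \<or> b = -1"

definition is_point :: "nat \<Rightarrow> point \<Rightarrow> bool" where
  "is_point n x \<longleftrightarrow> length x = n \<and> (\<forall>i<n. pm1 (x ! i))"

definition is_restr :: "nat \<Rightarrow> restr \<Rightarrow> bool" where
  "is_restr n \<rho> \<longleftrightarrow> length \<rho> = n \<and> (\<forall>i<n. \<rho> ! i = None \<or> (\<exists>b. pm1 b \<and> \<rho> ! i = Some b))"

definition in_restr :: "point \<Rightarrow> restr \<Rightarrow> bool" where
  "in_restr x \<rho> \<longleftrightarrow> length x = length \<rho> \<and>
     (\<forall>i<length \<rho>. \<rho> ! i = None \<or> \<rho> ! i = Some (x ! i))"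

text \<open>Intersection of two restrictions fixing disjoint coordinate sets.\<close>
definition restr_inter :: "restr \<Rightarrow> restr \<Rightarrow> restr" where
  "restr_inter \<rho> l = map2 (\<lambda>a b. case a of None \<Rightarrow> b | Some v \<Rightarrow> Some v) \<rho> l"

definition restrict_set :: "(point \<times> int) set \<Rightarrow> restr \<Rightarrow> (point \<times> int) set" where
  "restrict_set S \<rho> = {p \<in> S. in_restr (fst p) \<rho>}"

definition error :: "hyp \<Rightarrow> (point \<times> int) set \<Rightarrow> real" where
  "error h S = real (card {p \<in> S. h (fst p) \<noteq> snd p}) / real (card S)"

text \<open>Tree with root x_i and subtrees T0 (for x_i = -1) and T1 (for x_i = +1),
  as a set of leaf restrictions.\<close>
definition node :: "nat \<Rightarrow> restr set \<Rightarrow> restr set \<Rightarrow> restr set" where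
  "node i T0 T1 = (\<lambda>l. l[i := Some (-1)]) ` T0 \<union> (\<lambda>l. l[i := Some 1]) ` T1"

definition fixes_coord :: "restr set \<Rightarrow> nat \<Rightarrow> bool" where
  "fixes_coord T i \<longleftrightarrow> (\<exists>l\<in>T. l ! i \<noteq> None)"

inductive dtree :: "nat \<Rightarrow> nat \<Rightarrow> restr set \<Rightarrow> bool" for n where
  leaf: "dtree n 0 {replicate n None}"
| inner: "\<lbrakk> i < n; dtree n d T0; dtree n d T1; \<not> fixes_coord T0 i; \<not> fixes_coord T1 i \<rbrakk>
          \<Longrightarrow> dtree n (Suc d) (node i T0 T1)"

definition queries_only_free :: "restr set \<Rightarrow> restr \<Rightarrow> bool" where
  "queries_only_free T \<rho> \<longleftrightarrow> (\<forall>l\<in>T. \<forall>i<length \<rho>. l ! i \<noteq> None \<longrightarrow> \<rho> ! i = None)"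

definition compose :: "restr set \<Rightarrow> restr \<Rightarrow> (restr \<Rightarrow> hyp) \<Rightarrow> hyp" where
  "compose T \<rho> H x = H (restr_inter \<rho> (SOME l. l \<in> T \<and> in_restr x l)) x"

text \<open>FindTree as a relation: findtree S d H \<rho> T means T is a possible return value of
  FindTree(S, d, H, \<rho>) (ties in the argmin may be broken arbitrarily).\<close>
inductive findtree :: "(point \<times> int) set \<Rightarrow> nat \<Rightarrow> (restr \<Rightarrow> hyp) \<Rightarrow> restr \<Rightarrow> restr set \<Rightarrow> bool"
  where
  zero: "findtree S 0 H \<rho> {replicate (length \<rho>) None}"
| suc: "\<lbrakk> \<forall>i<length \<rho>. \<rho> ! i = None \<longrightarrow>
            findtree S d H (\<rho>[i := Some 1]) (Tp i) \<and> findtree S d H (\<rho>[i := Some (-1)]) (Tm i);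
          i0 < length \<rho>; \<rho> ! i0 = None;
          \<forall>i<length \<rho>. \<rho> ! i = None \<longrightarrow>
            error (compose (node i0 (Tm i0) (Tp i0)) \<rho> H) (restrict_set S \<rho>)
            \<le> error (compose (node i (Tm i) (Tp i)) \<rho> H) (restrict_set S \<rho>) \<rbrakk>
        \<Longrightarrow> findtree S (Suc d) H \<rho> (node i0 (Tm i0) (Tp i0))"

end

theory Submission
  imports Defs
begin

text \<open>A depth-(d+1) tree querying only coordinates free in \<rho> consists of a root x_i with
  \<rho>_i free and two depth-d subtrees querying only coordinates free in \<rho> \<inter> (x_i = -1) and
  \<rho> \<inter> (x_i = 1); on the examples lying in \<rho>, its number of mistakes is the sum of the
  mistakes of the two subtrees on the examples lying in these halves. Hence, by induction on d,
  for every root the recursive calls produce the best subtrees, and FindTree then picks the best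
  root. Errors on (S_test)_\<rho> are compared through mistake counts, as they share the denominator.\<close>

lemma in_restr_list_update:
  assumes "a ! i = None" "i < length a"
  shows "in_restr x (a[i := Some v]) \<longleftrightarrow> in_restr x a \<and> x ! i = v"
  using assms unfolding in_restr_def by (auto simp: nth_list_update)

lemma restrict_set_list_update:
  assumes "\<rho> ! i = None" "i < length \<rho>"
  shows "restrict_set S (\<rho>[i := Some v]) = {p \<in> restrict_set S \<rho>. fst p ! i = v}"
  using in_restr_list_update[OF assms] by (auto simp: restrict_set_def)

lemma not_fixes_coord_nth: "\<not> fixes_coord T i \<Longrightarrow> l \<in> T \<Longrightarrow> l ! i = None"
  by (auto simp: fixes_coord_def)

lemma dtree_length: "dtree n d T \<Longrightarrow> l \<in> T \<Longrightarrow> length l = n"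
  by (induction arbitrary: l rule: dtree.induct) (auto simp: node_def)

lemma dtree_nonempty: "dtree n d T \<Longrightarrow> T \<noteq> {}"
  by (induction rule: dtree.induct) (auto simp: node_def)

lemma leaves_containing_node:
  assumes "\<not> fixes_coord T0 i" "\<not> fixes_coord T1 i" "i < length x" "pm1 (x ! i)"
  shows "{l \<in> node i T0 T1. in_restr x l} =
    (\<lambda>l. l[i := Some (x ! i)]) ` {l \<in> (if x ! i = 1 then T1 else T0). in_restr x l}"
proof -
  have "in_restr x (l[i := Some v]) \<longleftrightarrow> in_restr x l \<and> x ! i = v" if "l \<in> T0 \<union> T1" for l v
  proof (cases "length l = length x")
    case True
    then show ?thesis
      using in_restr_list_update not_fixes_coord_nth assms(1-3) that by (metis Un_iff)
  qed (auto simp: in_restr_def)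
  then show ?thesis
    using assms(4) unfolding node_def pm1_def by auto
qed

lemma dtree_unique_leaf:
  "dtree n d T \<Longrightarrow> is_point n x \<Longrightarrow> \<exists>l. {l' \<in> T. in_restr x l'} = {l}"
proof (induction rule: dtree.induct)
  case leaf
  then show ?case by (auto simp: in_restr_def is_point_def)
next
  case (inner i d T0 T1)
  then have "i < length x" "pm1 (x ! i)" by (auto simp: is_point_def)
  with inner show ?case by (auto simp: leaves_containing_node)
qed

lemma restr_inter_list_update:
  assumes "\<rho> ! i = None" "l ! i = None" "length l = length \<rho>"
  shows "restr_inter \<rho> (l[i := Some v]) = restr_inter (\<rho>[i := Some v]) l"
proof (rule nth_equalityI)
  fix j assume "j < length (restr_inter \<rho> (l[i := Some v]))"
  then show "restr_inter \<rho> (l[i := Some v]) ! j = restr_inter (\<rho>[i := Some v]) l ! j"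
    using assms unfolding restr_inter_def by (cases "j = i") (auto split: option.split)
qed (use assms in \<open>simp add: restr_inter_def\<close>)

lemma compose_eq_unique_leaf:
  "{l' \<in> T. in_restr x l'} = {l} \<Longrightarrow> compose T \<rho> H x = H (restr_inter \<rho> l) x"
  unfolding compose_def by (metis (mono_tags, lifting) mem_Collect_eq singletonD singletonI someI_ex)

lemma compose_node:
  assumes "dtree n d T0" "dtree n d T1" "\<not> fixes_coord T0 i" "\<not> fixes_coord T1 i"
    "i < n" "length \<rho> = n" "\<rho> ! i = None" "is_point n x"
  shows "compose (node i T0 T1) \<rho> H x =
    compose (if x ! i = 1 then T1 else T0) (\<rho>[i := Some (x ! i)]) H x"
proof -
  let ?T = "if x ! i = 1 then T1 else T0"
  have "dtree n d ?T"
    using assms(1,2) by simp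
  then obtain l where l: "{l' \<in> ?T. in_restr x l'} = {l}"
    using dtree_unique_leaf assms(8) by blast
  have "i < length x" "pm1 (x ! i)"
    using assms by (auto simp: is_point_def)
  with l have "{l' \<in> node i T0 T1. in_restr x l'} = {l[i := Some (x ! i)]}"
    using leaves_containing_node assms(3,4) by simp
  moreover have "l \<in> T0 \<union> T1"
    using l by (auto split: if_splits)
  then have "l ! i = None" "length l = length \<rho>"
    using assms not_fixes_coord_nth dtree_length by blast+
  ultimately show ?thesis
    using l assms(7) by (simp add: compose_eq_unique_leaf restr_inter_list_update)
qed

lemma queries_only_free_Un:
  "queries_only_free (A \<union> B) \<rho> \<longleftrightarrow> queries_only_free A \<rho> \<and> queries_only_free B \<rho>"
  unfolding queries_only_free_def by blast

lemma queries_only_free_image_list_update: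
  assumes "\<not> fixes_coord T i" "\<rho> ! i = None"
  shows "queries_only_free ((\<lambda>l. l[i := Some v]) ` T) \<rho> \<longleftrightarrow> queries_only_free T (\<rho>[i := Some v])"
proof -
  have "(\<forall>j<length \<rho>. l[i := Some v] ! j \<noteq> None \<longrightarrow> \<rho> ! j = None) \<longleftrightarrow>
      (\<forall>j<length \<rho>. l ! j \<noteq> None \<longrightarrow> \<rho>[i := Some v] ! j = None)" if "l \<in> T" for l
    using not_fixes_coord_nth[OF assms(1) that] assms(2) by (metis nth_list_update_neq)
  then show ?thesis
    unfolding queries_only_free_def by auto
qed

lemma queries_only_free_node_iff:
  assumes "\<not> fixes_coord T0 i" "\<not> fixes_coord T1 i" "\<rho> ! i = None"
  shows "queries_only_free (node i T0 T1) \<rho> \<longleftrightarrow>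
    queries_only_free T0 (\<rho>[i := Some (-1)]) \<and> queries_only_free T1 (\<rho>[i := Some 1])"
  using assms by (simp add: node_def queries_only_free_Un queries_only_free_image_list_update)

lemma not_fixes_coord_if_queries_only_free:
  assumes "queries_only_free T (\<rho>[i := Some v])" "i < length \<rho>"
  shows "\<not> fixes_coord T i"
  using assms unfolding queries_only_free_def fixes_coord_def by fastforce

lemma dtree_Suc_queries_only_freeE:
  assumes "dtree n (Suc d) T" "queries_only_free T \<rho>" "length \<rho> = n"
  obtains i T0 T1 where "T = node i T0 T1" "i < n" "\<rho> ! i = None"
    "dtree n d T0" "dtree n d T1" "\<not> fixes_coord T0 i" "\<not> fixes_coord T1 i"
    "queries_only_free T0 (\<rho>[i := Some (-1)])" "queries_only_free T1 (\<rho>[i := Some 1])"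
proof -
  obtain i T0 T1 where T: "T = node i T0 T1" "i < n" "dtree n d T0" "dtree n d T1"
    "\<not> fixes_coord T0 i" "\<not> fixes_coord T1 i"
    using assms(1) by (cases rule: dtree.cases) auto
  obtain l where l: "l \<in> T0"
    using dtree_nonempty[OF T(3)] by blast
  then have "l[i := Some (-1)] \<in> T" "i < length l"
    using T dtree_length by (auto simp: node_def)
  then have "\<rho> ! i = None"
    using assms(2,3) T(2) unfolding queries_only_free_def by fastforce
  with T assms(2) show thesis
    using that queries_only_free_node_iff by blast
qed

lemma is_restr_list_update:
  assumes "is_restr n \<rho>" "pm1 v"
  shows "is_restr n (\<rho>[i := Some v])"
proof -
  have "\<rho>[i := Some v] ! j = None \<or> (\<exists>b. pm1 b \<and> \<rho>[i := Some v] ! j = Some b)" if "j < n" for j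
    using assms that unfolding is_restr_def by (cases "j = i") auto
  then show ?thesis
    using assms(1) unfolding is_restr_def by simp
qed

definition mistakes :: "restr set \<Rightarrow> restr \<Rightarrow> (restr \<Rightarrow> hyp) \<Rightarrow> (point \<times> int) set \<Rightarrow> nat" where
  "mistakes T \<rho> H S = card {p \<in> restrict_set S \<rho>. compose T \<rho> H (fst p) \<noteq> snd p}"

lemma error_compose_le_iff_mistakes_le:
  assumes "finite S"
  shows "error (compose T \<rho> H) (restrict_set S \<rho>) \<le> error (compose T' \<rho> H) (restrict_set S \<rho>)
    \<longleftrightarrow> mistakes T \<rho> H S \<le> mistakes T' \<rho> H S"
proof (cases "restrict_set S \<rho> = {}")
  case False
  moreover have "finite (restrict_set S \<rho>)"
    using assms by (simp add: restrict_set_def)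
  ultimately show ?thesis
    by (simp add: error_def mistakes_def divide_le_cancel card_gt_0_iff)
qed (simp add: error_def mistakes_def)

lemma mistakes_node:
  assumes "finite S" "\<forall>p\<in>S. is_point n (fst p)"
    "dtree n d T0" "dtree n d T1" "\<not> fixes_coord T0 i" "\<not> fixes_coord T1 i"
    "i < n" "length \<rho> = n" "\<rho> ! i = None"
  shows "mistakes (node i T0 T1) \<rho> H S =
    mistakes T0 (\<rho>[i := Some (-1)]) H S + mistakes T1 (\<rho>[i := Some 1]) H S"
proof -
  let ?wrong = "\<lambda>T \<rho>. {p \<in> restrict_set S \<rho>. compose T \<rho> H (fst p) \<noteq> snd p}"
  have "p \<in> ?wrong (node i T0 T1) \<rho> \<longleftrightarrow>
      p \<in> ?wrong T0 (\<rho>[i := Some (-1)]) \<or> p \<in> ?wrong T1 (\<rho>[i := Some 1])" for p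
  proof (cases "p \<in> restrict_set S \<rho>")
    case True
    then have "is_point n (fst p)"
      using assms(2) by (simp add: restrict_set_def)
    moreover from this have "fst p ! i = 1 \<or> fst p ! i = -1"
      using assms(7) by (simp add: is_point_def pm1_def)
    ultimately show ?thesis
      using True compose_node[OF assms(3-9)] restrict_set_list_update[OF assms(9)] assms(7,8)
      by auto
  qed (use restrict_set_list_update[OF assms(9)] assms(7,8) in auto)
  then have "?wrong (node i T0 T1) \<rho> = ?wrong T0 (\<rho>[i := Some (-1)]) \<union> ?wrong T1 (\<rho>[i := Some 1])"
    by blast
  moreover have "?wrong T0 (\<rho>[i := Some (-1)]) \<inter> ?wrong T1 (\<rho>[i := Some 1]) = {}"
    using restrict_set_list_update assms(7-9) by auto
  moreover have "finite (?wrong T \<rho>')" for T \<rho>'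
    using assms(1) by (simp add: restrict_set_def)
  ultimately show ?thesis
    unfolding mistakes_def by (simp add: card_Un_disjoint)
qed

lemma findtree_dtree:
  assumes "findtree S d H \<rho> T" "is_restr n \<rho>"
  shows "dtree n d T \<and> queries_only_free T \<rho>"
  using assms
proof (induction rule: findtree.induct)
  case (zero S H \<rho>)
  then show ?case
    by (auto intro: dtree.leaf simp: is_restr_def queries_only_free_def)
next
  case (suc \<rho> S d H Tp Tm i0)
  then have "dtree n d (Tp i0) \<and> queries_only_free (Tp i0) (\<rho>[i0 := Some 1])"
    "dtree n d (Tm i0) \<and> queries_only_free (Tm i0) (\<rho>[i0 := Some (-1)])"
    using is_restr_list_update by (auto simp: pm1_def)
  moreover from this have "\<not> fixes_coord (Tp i0) i0" "\<not> fixes_coord (Tm i0) i0"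
    using not_fixes_coord_if_queries_only_free suc by blast+
  ultimately show ?case
    using suc dtree.inner queries_only_free_node_iff
    by (auto simp: is_restr_def)
qed

lemma findtree_mistakes_minimal:
  assumes "findtree S d H \<rho> T" "finite S" "\<forall>p\<in>S. is_point n (fst p)" "is_restr n \<rho>"
    "dtree n d T'" "queries_only_free T' \<rho>"
  shows "mistakes T \<rho> H S \<le> mistakes T' \<rho> H S"
  using assms
proof (induction arbitrary: T' rule: findtree.induct)
  case (zero S H \<rho>)
  then have "T' = {replicate (length \<rho>) None}"
    by (auto simp: is_restr_def elim: dtree.cases)
  then show ?case
    by simp
next
  case (suc \<rho> S d H Tp Tm i0)
  have len: "length \<rho> = n"
    using suc.prems(3) by (simp add: is_restr_def)
  obtain i T0 T1 where T': "T' = node i T0 T1" "i < n" "\<rho> ! i = None"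
    "dtree n d T0" "dtree n d T1" "\<not> fixes_coord T0 i" "\<not> fixes_coord T1 i"
    "queries_only_free T0 (\<rho>[i := Some (-1)])" "queries_only_free T1 (\<rho>[i := Some 1])"
    using dtree_Suc_queries_only_freeE[OF suc.prems(4,5) len] by blast
  have restr: "is_restr n (\<rho>[i := Some 1])" "is_restr n (\<rho>[i := Some (-1)])"
    using suc.prems(3) is_restr_list_update by (auto simp: pm1_def)
  have sub: "dtree n d (Tp i) \<and> queries_only_free (Tp i) (\<rho>[i := Some 1])"
    "dtree n d (Tm i) \<and> queries_only_free (Tm i) (\<rho>[i := Some (-1)])"
    using suc.IH T'(2,3) len restr findtree_dtree by blast+
  have "mistakes (node i0 (Tm i0) (Tp i0)) \<rho> H S \<le> mistakes (node i (Tm i) (Tp i)) \<rho> H S"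
    using suc.hyps(3) T'(2,3) len error_compose_le_iff_mistakes_le[OF suc.prems(1)] by auto
  also have "\<dots> = mistakes (Tm i) (\<rho>[i := Some (-1)]) H S + mistakes (Tp i) (\<rho>[i := Some 1]) H S"
    using sub mistakes_node[OF suc.prems(1,2)] T'(2,3) len not_fixes_coord_if_queries_only_free
    by blast
  also have "\<dots> \<le> mistakes T0 (\<rho>[i := Some (-1)]) H S + mistakes T1 (\<rho>[i := Some 1]) H S"
    using suc.IH T'(2-5,8,9) len suc.prems(1,2) restr by (simp add: add_mono)
  also have "\<dots> = mistakes T' \<rho> H S"
    using mistakes_node[OF suc.prems(1,2)] T' len by simp
  finally show ?case .
qed

theorem claim6p5:
  fixes n d :: nat and S :: "(point \<times> int) set" and H :: "restr \<Rightarrow> hyp"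
    and \<rho> :: restr and T :: "restr set"
  assumes "finite S"
    and "\<forall>p\<in>S. is_point n (fst p) \<and> pm1 (snd p)"
    and "is_restr n \<rho>"
    and "findtree S d H \<rho> T"
  shows "dtree n d T \<and> queries_only_free T \<rho> \<and>
    (\<forall>T'. dtree n d T' \<and> queries_only_free T' \<rho> \<longrightarrow>
       error (compose T \<rho> H) (restrict_set S \<rho>) \<le> error (compose T' \<rho> H) (restrict_set S \<rho>))"
  using findtree_dtree[OF assms(4,3)] findtree_mistakes_minimal[OF assms(4,1) _ assms(3)] assms(2)
    error_compose_le_iff_mistakes_le[OF assms(1)] by simp

end
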